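(* The following problem is undecidable: given a finite signature $\Sigma$ and a finite set $E$ of equations between $\Sigma$-terms, decide whether the monad $T$ on $\mathbf{Set}$ presented by $(\Sigma,E)$ is affine, i.e. whether $T1$ is a one-element set.
   Context: The monad presented by $(\Sigma,E)$ is the free-algebra monad: $TX$ is the carrier of the free $\Sigma$-algebra satisfying $E$ generated by $X$ (terms over $X$ modulo the congruence generated by substitution instances of $E$), $Tf$ substitutes $f(x)$ for $x$, $\eta$ sends a variable to itself, and $\mu$ flattens terms of terms. A monad is affine if $T1$ is terminal, i.e. a one-element set. *)

theory Defs
  imports Main "HOL-Library.Nat_Bijection"
begin

datatype recf = Zero | Succ | Proj nat | Comp recf "recf list"
  | PrimRec recf recf | Mu recf

inductive ev :: "recf \<Rightarrow> nat list \<Rightarrow> nat \<Rightarrow> bool" where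
  ev_zero: "ev Zero xs 0"
| ev_succ: "ev Succ (x # xs) (Suc x)"
| ev_proj: "i < length xs \<Longrightarrow> ev (Proj i) xs (xs ! i)"
| ev_comp: "list_all2 (\<lambda>g y. ev g xs y) gs ys \<Longrightarrow> ev f ys z \<Longrightarrow> ev (Comp f gs) xs z"
| ev_prim0: "ev f xs z \<Longrightarrow> ev (PrimRec f g) (0 # xs) z"
| ev_primS: "ev (PrimRec f g) (n # xs) y \<Longrightarrow> ev g (y # n # xs) z \<Longrightarrow>
    ev (PrimRec f g) (Suc n # xs) z"
| ev_mu: "ev f (n # xs) 0 \<Longrightarrow> (\<forall>m<n. \<exists>y. y > 0 \<and> ev f (m # xs) y) \<Longrightarrow>
    ev (Mu f) xs n"

text \<open>Function symbols are natural numbers; a finite signature is a list of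
arities: symbol f exists iff f < length sig, with arity sig ! f.\<close>
datatype 'v trm = Var 'v | App nat "'v trm list"

fun wf_trm :: "nat list \<Rightarrow> 'v trm \<Rightarrow> bool" where
  "wf_trm sig (Var v) = True"
| "wf_trm sig (App f ts) = (f < length sig \<and> length ts = sig ! f \<and> (\<forall>t\<in>set ts. wf_trm sig t))"

primrec subst :: "('v \<Rightarrow> 'w trm) \<Rightarrow> 'v trm \<Rightarrow> 'w trm" where
  "subst \<sigma> (Var v) = \<sigma> v"
| "subst \<sigma> (App f ts) = App f (map (subst \<sigma>) ts)"

inductive eqv :: "nat list \<Rightarrow> (nat trm \<times> nat trm) list \<Rightarrow> 'x trm \<Rightarrow> 'x trm \<Rightarrow> bool"
  for sig E where
  eqv_refl: "wf_trm sig t \<Longrightarrow> eqv sig E t t"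
| eqv_sym: "eqv sig E s t \<Longrightarrow> eqv sig E t s"
| eqv_trans: "eqv sig E s t \<Longrightarrow> eqv sig E t u \<Longrightarrow> eqv sig E s u"
| eqv_cong: "f < length sig \<Longrightarrow> length ts = sig ! f \<Longrightarrow> list_all2 (eqv sig E) ts us \<Longrightarrow>
    eqv sig E (App f ts) (App f us)"
| eqv_ax: "(l, r) \<in> set E \<Longrightarrow> (\<forall>v. wf_trm sig (\<sigma> v)) \<Longrightarrow>
    eqv sig E (subst \<sigma> l) (subst \<sigma> r)"

text \<open>Carrier of TX: well-formed terms over X modulo the congruence.\<close>
definition T_carrier :: "nat list \<Rightarrow> (nat trm \<times> nat trm) list \<Rightarrow> 'x trm set set" where
  "T_carrier sig E = {t. wf_trm sig t} // {(s, t). eqv sig E s t}"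

text \<open>Affine: T1 is a one-element set (1 = unit).\<close>
definition affine :: "nat list \<Rightarrow> (nat trm \<times> nat trm) list \<Rightarrow> bool" where
  "affine sig E \<longleftrightarrow> (\<exists>c. (T_carrier sig E :: unit trm set set) = {c})"

definition valid_instance :: "nat list \<Rightarrow> (nat trm \<times> nat trm) list \<Rightarrow> bool" where
  "valid_instance sig E \<longleftrightarrow> (\<forall>(l, r) \<in> set E. wf_trm sig l \<and> wf_trm sig r)"

fun enc_trm :: "nat trm \<Rightarrow> nat" where
  "enc_trm (Var v) = prod_encode (0, v)"
| "enc_trm (App f ts) = prod_encode (Suc f, list_encode (map enc_trm ts))"

definition enc_instance :: "nat list \<Rightarrow> (nat trm \<times> nat trm) list \<Rightarrow> nat" where
  "enc_instance sig E = prod_encode (list_encode sig,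
     list_encode (map (\<lambda>(l, r). prod_encode (enc_trm l, enc_trm r)) E))"

definition decides_affine :: "recf \<Rightarrow> bool" where
  "decides_affine r \<longleftrightarrow> (\<forall>sig E. valid_instance sig E \<longrightarrow>
     ev r [enc_instance sig E] (if affine sig E then 1 else 0))"

end

theory Submission
  imports Defs "HOL-Library.More_List"
begin

text \<open>
  A fixed finite presentation axiomatises an interpreter for partial recursive functions: its
  terms contain numerals, lists and codes of programs, and \<open>tRun p x\<close> runs the program coded
  by \<open>p\<close> on the argument list \<open>x\<close>, so that every terminating computation of \<open>P\<close> on \<open>xs\<close>
  with result \<open>y\<close> becomes a derivable equation \<open>tRun (code P) xs = y\<close>.
  Adding the one equation \<open>tCollapse (tRun (code P) xs) x = x\<close>, where \<open>tCollapse 0 x = 0\<close>,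
  yields a presentation that is affine if \<open>P\<close> outputs \<open>0\<close> on \<open>xs\<close> (every term then equals
  \<open>0\<close>) and not affine if \<open>P\<close> outputs a positive number: then an algebra of values in which
  \<open>tRun\<close> is a genuine interpreter satisfies all equations and separates \<open>0\<close> from the
  variable.

  Given a decider \<open>D\<close>, the program \<open>Q = diag_rf D\<close> computes from the code of \<open>Q\<close> the code
  of this instance for \<open>P = D \<circ> Q\<close> on that input, in the manner of Kleene's recursion
  theorem. So \<open>P\<close> outputs \<open>D\<close>'s verdict on the instance itself, while the instance is affine
  exactly when that output is \<open>0\<close>, i.e. when \<open>D\<close> declares it not affine.
\<close>

section \<open>Algebras satisfying a presentation\<close>

fun eval_trm :: "(nat \<Rightarrow> 'a list \<Rightarrow> 'a) \<Rightarrow> ('v \<Rightarrow> 'a) \<Rightarrow> 'v trm \<Rightarrow> 'a" where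
  "eval_trm A \<rho> (Var v) = \<rho> v"
| "eval_trm A \<rho> (App f ts) = A f (map (eval_trm A \<rho>) ts)"

definition satisfies :: "(nat \<Rightarrow> 'a list \<Rightarrow> 'a) \<Rightarrow> (nat trm \<times> nat trm) list \<Rightarrow> bool" where
  "satisfies A E \<longleftrightarrow> (\<forall>(l, r) \<in> set E. \<forall>\<rho>. eval_trm A \<rho> l = eval_trm A \<rho> r)"

lemma eval_trm_subst: "eval_trm A \<rho> (subst \<sigma> t) = eval_trm A (\<lambda>v. eval_trm A \<rho> (\<sigma> v)) t"
  by (induction t) (auto cong: map_cong)

theorem eqv_sound:
  assumes "eqv sig E s t" and "satisfies A E"
  shows "eval_trm A \<rho> s = eval_trm A \<rho> t"
  using assms(1)
proof (induction rule: eqv.induct)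
  case (eqv_cong f ts us)
  from eqv_cong.IH have "map (eval_trm A \<rho>) ts = map (eval_trm A \<rho>) us"
    by (induction rule: list_all2_induct) auto
  then show ?case by simp
next
  case (eqv_ax l r \<sigma>)
  with assms(2) show ?case by (auto simp: satisfies_def eval_trm_subst)
qed auto

lemma Image_eqv_eq:
  assumes "eqv sig E s t"
  shows "{(s, t). eqv sig E s t} `` {s} = {(s, t). eqv sig E s t} `` {t}"
  using assms by (auto intro: eqv.eqv_trans eqv.eqv_sym)

theorem affine_iff_eqv_Var:
  "affine sig E \<longleftrightarrow> (\<forall>t :: unit trm. wf_trm sig t \<longrightarrow> eqv sig E t (Var ()))"
proof
  let ?R = "{(s, t). eqv sig E s (t :: unit trm)}"
  assume "affine sig E"
  then obtain c where c: "(T_carrier sig E :: unit trm set set) = {c}"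
    unfolding affine_def by blast
  have class_eq: "?R `` {t} = c" if "wf_trm sig t" for t
  proof -
    have "?R `` {t} \<in> (T_carrier sig E :: unit trm set set)"
      unfolding T_carrier_def using that by (intro quotientI) simp
    with c show ?thesis by simp
  qed
  show "\<forall>t. wf_trm sig t \<longrightarrow> eqv sig E t (Var ())"
  proof (intro allI impI)
    fix t :: "unit trm" assume "wf_trm sig t"
    then have "?R `` {t} = c" by (rule class_eq)
    also have "c = ?R `` {Var ()}" by (rule class_eq[symmetric]) simp
    finally have "?R `` {t} = ?R `` {Var ()}" .
    moreover have "Var () \<in> ?R `` {Var ()}" by (simp add: eqv.eqv_refl)
    ultimately have "Var () \<in> ?R `` {t}" by (simp only:)
    then show "eqv sig E t (Var ())" by simp
  qed
next
  let ?R = "{(s, t). eqv sig E s (t :: unit trm)}"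
  assume "\<forall>t :: unit trm. wf_trm sig t \<longrightarrow> eqv sig E t (Var ())"
  then have class_eq: "?R `` {t} = ?R `` {Var ()}" if "wf_trm sig t" for t
    using that by (intro Image_eqv_eq) blast
  have "(T_carrier sig E :: unit trm set set) = {?R `` {Var ()}}"
  proof (intro equalityI subsetI)
    fix X assume "X \<in> (T_carrier sig E :: unit trm set set)"
    then obtain t where "wf_trm sig t" "X = ?R `` {t}"
      unfolding T_carrier_def by (auto elim: quotientE)
    then show "X \<in> {?R `` {Var ()}}" by (simp only: class_eq singleton_iff)
  next
    fix X assume "X \<in> {?R `` {Var ()}}"
    then show "X \<in> (T_carrier sig E :: unit trm set set)"
      unfolding T_carrier_def by (simp only: singleton_iff) (intro quotientI, simp)
  qed
  then show "affine sig E" unfolding affine_def by blast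
qed

section \<open>A total interpreter on a datatype of values\<close>

text \<open>\<open>Junk\<close> absorbs ill-formed applications and diverging searches, which makes the
  interpreter total.\<close>

datatype val =
  VZero | is_VSuc: VSuc val | VNil | VCons val val
| PZero | PSucc | PProj val | PComp val val | PPrimRec val val | PMu val
| Junk

fun vnth :: "val \<Rightarrow> val \<Rightarrow> val" where
  "vnth VZero (VCons x _) = x"
| "vnth (VSuc i) (VCons _ xs) = vnth i xs"
| "vnth _ _ = Junk"

fun vprimrec :: "(val \<Rightarrow> val) \<Rightarrow> (val \<Rightarrow> val) \<Rightarrow> val \<Rightarrow> val \<Rightarrow> val" where
  "vprimrec F G VZero xs = F xs"
| "vprimrec F G (VSuc n) xs = G (VCons (vprimrec F G n xs) (VCons n xs))"
| "vprimrec F G _ xs = Junk"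

definition vmin :: "(val \<Rightarrow> val) \<Rightarrow> val \<Rightarrow> val \<Rightarrow> val" where
  "vmin F n xs =
    (if \<exists>j. \<not> is_VSuc (F (VCons ((VSuc ^^ j) n) xs))
     then let m = (VSuc ^^ (LEAST j. \<not> is_VSuc (F (VCons ((VSuc ^^ j) n) xs)))) n
          in if F (VCons m xs) = VZero then m else Junk
     else Junk)"

lemma vmin_unfold:
  "vmin F n xs = (case F (VCons n xs) of VZero \<Rightarrow> n | VSuc _ \<Rightarrow> vmin F (VSuc n) xs | _ \<Rightarrow> Junk)"
proof -
  let ?P = "\<lambda>n j. \<not> is_VSuc (F (VCons ((VSuc ^^ j) n) xs))"
  show ?thesis
  proof (cases "is_VSuc (F (VCons n xs))")
    case True
    then obtain y where y: "F (VCons n xs) = VSuc y" by (cases "F (VCons n xs)") auto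
    have shift: "(VSuc ^^ j) (VSuc n) = (VSuc ^^ Suc j) n" for j
      by (simp only: funpow_Suc_right comp_def)
    have ex: "(\<exists>j. ?P n j) \<longleftrightarrow> (\<exists>j. ?P (VSuc n) j)"
      using True unfolding shift by (metis funpow_0 not0_implies_Suc)
    have "(LEAST j. ?P n j) = Suc (LEAST j. ?P (VSuc n) j)" if "?P n j" for j
      unfolding shift using Least_Suc[where P="?P n", OF that] True by simp
    then have "vmin F n xs = vmin F (VSuc n) xs"
      using ex unfolding vmin_def Let_def by (simp only: shift) auto
    with y show ?thesis by simp
  next
    case False
    then have "\<exists>j. ?P n j" and "(LEAST j. ?P n j) = 0"
      by (auto intro: exI[of _ 0] Least_eq_0)
    then show ?thesis
      using False unfolding vmin_def by (cases "F (VCons n xs)") (auto simp: Let_def)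
  qed
qed

primrec run :: "val \<Rightarrow> val \<Rightarrow> val" where
  "run VZero = (\<lambda>_. Junk)"
| "run (VSuc a) = (\<lambda>_. Junk)"
| "run Junk = (\<lambda>_. Junk)"
| "run VNil = (\<lambda>_. VNil)"
| "run (VCons g gs) = (\<lambda>xs. VCons (run g xs) (run gs xs))"
| "run PZero = (\<lambda>_. VZero)"
| "run PSucc = (\<lambda>xs. case xs of VCons x _ \<Rightarrow> VSuc x | _ \<Rightarrow> Junk)"
| "run (PProj i) = vnth i"
| "run (PComp f gs) = (\<lambda>xs. run f (run gs xs))"
| "run (PPrimRec f g) = (\<lambda>xs. case xs of VCons n ys \<Rightarrow> vprimrec (run f) (run g) n ys | _ \<Rightarrow> Junk)"
| "run (PMu f) = vmin (run f) VZero"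

definition vmin_step :: "val \<Rightarrow> val \<Rightarrow> val \<Rightarrow> val \<Rightarrow> val" where
  "vmin_step a f n xs = (case a of VZero \<Rightarrow> n | VSuc _ \<Rightarrow> vmin (run f) (VSuc n) xs | _ \<Rightarrow> Junk)"

lemma vmin_run_unfold: "vmin (run f) n xs = vmin_step (run f (VCons n xs)) f n xs"
  unfolding vmin_step_def by (subst vmin_unfold) (simp split: val.splits)

definition vcollapse :: "val \<Rightarrow> val \<Rightarrow> val" where
  "vcollapse a x = (if a = VZero then VZero else x)"

definition vnum :: "nat \<Rightarrow> val" where
  "vnum n = (VSuc ^^ n) VZero"

definition vlist :: "val list \<Rightarrow> val" where
  "vlist xs = foldr VCons xs VNil"

lemma vnum_simps [simp]: "vnum 0 = VZero" "vnum (Suc n) = VSuc (vnum n)"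
  by (simp_all add: vnum_def)

lemma vlist_simps [simp]: "vlist [] = VNil" "vlist (x # xs) = VCons x (vlist xs)"
  by (simp_all add: vlist_def)

fun vcode :: "recf \<Rightarrow> val" where
  "vcode Zero = PZero"
| "vcode Succ = PSucc"
| "vcode (Proj i) = PProj (vnum i)"
| "vcode (Comp f gs) = PComp (vcode f) (vlist (map vcode gs))"
| "vcode (PrimRec f g) = PPrimRec (vcode f) (vcode g)"
| "vcode (Mu f) = PMu (vcode f)"

lemma vnth_vlist: "i < length xs \<Longrightarrow> vnth (vnum i) (vlist xs) = xs ! i"
  by (induction xs arbitrary: i) (auto simp: less_Suc_eq_0_disj)

lemma run_vlist: "run (vlist gs) xs = vlist (map (\<lambda>g. run g xs) gs)"
  by (induction gs) auto

lemma vmin_vnum: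
  assumes "F (VCons (vnum n) xs) = VZero" and "\<forall>k<n. is_VSuc (F (VCons (vnum k) xs))"
    and "m \<le> n"
  shows "vmin F (vnum m) xs = vnum n"
  using assms(3)
proof (induction rule: inc_induct)
  case base
  show ?case using assms(1) by (subst vmin_unfold) simp
next
  case (step m)
  then obtain y where "F (VCons (vnum m) xs) = VSuc y"
    using assms(2) by (meson is_VSuc_def)
  with step.IH show ?case by (subst vmin_unfold) simp
qed

theorem run_vcode: "ev p xs y \<Longrightarrow> run (vcode p) (vlist (map vnum xs)) = vnum y"
proof (induction rule: ev.induct)
  case (ev_proj i xs)
  then show ?case by (simp add: vnth_vlist)
next
  case (ev_comp xs gs ys f z)
  have "map (\<lambda>g. run (vcode g) (vlist (map vnum xs))) gs = map vnum ys"
    using ev_comp.IH(1) by (induction rule: list_all2_induct) auto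
  with ev_comp.IH(2) show ?case by (simp add: run_vlist comp_def)
next
  case (ev_mu f n xs)
  have "\<forall>k<n. is_VSuc (run (vcode f) (VCons (vnum k) (vlist (map vnum xs))))"
  proof (intro allI impI)
    fix k assume "k < n"
    then obtain y where "0 < y" "run (vcode f) (vlist (map vnum (k # xs))) = vnum y"
      using ev_mu.IH(2) by blast
    then show "is_VSuc (run (vcode f) (VCons (vnum k) (vlist (map vnum xs))))"
      by (cases y) auto
  qed
  with ev_mu.IH(1) vmin_vnum[of _ n _ 0] show ?case by simp
qed auto

section \<open>The interpreter presentation\<close>

definition interp_sig :: "nat list" where
  "interp_sig = [0, 1, 0, 2, 0, 0, 1, 2, 2, 1, 2, 2, 3, 4, 2]"

lemma interp_sig_simps [simp]:
  "length interp_sig = 15"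
  "interp_sig ! 0 = 0" "interp_sig ! Suc 0 = 1" "interp_sig ! 2 = 0" "interp_sig ! 3 = 2"
  "interp_sig ! 4 = 0" "interp_sig ! 5 = 0" "interp_sig ! 6 = 1" "interp_sig ! 7 = 2"
  "interp_sig ! 8 = 2" "interp_sig ! 9 = 1" "interp_sig ! 10 = 2" "interp_sig ! 11 = 2"
  "interp_sig ! 12 = 3" "interp_sig ! 13 = 4" "interp_sig ! 14 = 2"
  by (simp_all add: interp_sig_def)

abbreviation tZero :: "'v trm" where "tZero \<equiv> App 0 []"
text \<open>\<open>Suc 0\<close> rather than \<open>1\<close> keeps \<open>tSuc\<close> in simp normal form.\<close>
abbreviation tSuc :: "'v trm \<Rightarrow> 'v trm" where "tSuc a \<equiv> App (Suc 0) [a]"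
abbreviation tNil :: "'v trm" where "tNil \<equiv> App 2 []"
abbreviation tCons :: "'v trm \<Rightarrow> 'v trm \<Rightarrow> 'v trm" where "tCons a b \<equiv> App 3 [a, b]"
abbreviation pZero :: "'v trm" where "pZero \<equiv> App 4 []"
abbreviation pSucc :: "'v trm" where "pSucc \<equiv> App 5 []"
abbreviation pProj :: "'v trm \<Rightarrow> 'v trm" where "pProj a \<equiv> App 6 [a]"
abbreviation pComp :: "'v trm \<Rightarrow> 'v trm \<Rightarrow> 'v trm" where "pComp a b \<equiv> App 7 [a, b]"
abbreviation pPrimRec :: "'v trm \<Rightarrow> 'v trm \<Rightarrow> 'v trm" where "pPrimRec a b \<equiv> App 8 [a, b]"
abbreviation pMu :: "'v trm \<Rightarrow> 'v trm" where "pMu a \<equiv> App 9 [a]"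
abbreviation tRun :: "'v trm \<Rightarrow> 'v trm \<Rightarrow> 'v trm" where "tRun a b \<equiv> App 10 [a, b]"
abbreviation tNth :: "'v trm \<Rightarrow> 'v trm \<Rightarrow> 'v trm" where "tNth a b \<equiv> App 11 [a, b]"
abbreviation tMin :: "'v trm \<Rightarrow> 'v trm \<Rightarrow> 'v trm \<Rightarrow> 'v trm" where "tMin a b c \<equiv> App 12 [a, b, c]"
abbreviation tMinStep :: "'v trm \<Rightarrow> 'v trm \<Rightarrow> 'v trm \<Rightarrow> 'v trm \<Rightarrow> 'v trm" where
  "tMinStep a b c d \<equiv> App 13 [a, b, c, d]"
abbreviation tCollapse :: "'v trm \<Rightarrow> 'v trm \<Rightarrow> 'v trm" where "tCollapse a b \<equiv> App 14 [a, b]"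

definition val_alg :: "nat \<Rightarrow> val list \<Rightarrow> val" where
  "val_alg f vs =
    (if f = 0 then VZero else if f = 1 then VSuc (vs ! 0) else if f = 2 then VNil
     else if f = 3 then VCons (vs ! 0) (vs ! 1) else if f = 4 then PZero else if f = 5 then PSucc
     else if f = 6 then PProj (vs ! 0) else if f = 7 then PComp (vs ! 0) (vs ! 1)
     else if f = 8 then PPrimRec (vs ! 0) (vs ! 1) else if f = 9 then PMu (vs ! 0)
     else if f = 10 then run (vs ! 0) (vs ! 1) else if f = 11 then vnth (vs ! 0) (vs ! 1)
     else if f = 12 then vmin (run (vs ! 0)) (vs ! 1) (vs ! 2)
     else if f = 13 then vmin_step (vs ! 0) (vs ! 1) (vs ! 2) (vs ! 3)
     else if f = 14 then vcollapse (vs ! 0) (vs ! 1) else Junk)"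

lemma val_alg_simps [simp]:
  "val_alg 0 [] = VZero" "val_alg (Suc 0) [a] = VSuc a" "val_alg 2 [] = VNil"
  "val_alg 3 [a, b] = VCons a b" "val_alg 4 [] = PZero" "val_alg 5 [] = PSucc"
  "val_alg 6 [a] = PProj a" "val_alg 7 [a, b] = PComp a b" "val_alg 8 [a, b] = PPrimRec a b"
  "val_alg 9 [a] = PMu a" "val_alg 10 [a, b] = run a b" "val_alg 11 [a, b] = vnth a b"
  "val_alg 12 [a, b, c] = vmin (run a) b c" "val_alg 13 [a, b, c, d] = vmin_step a b c d"
  "val_alg 14 [a, b] = vcollapse a b"
  by (simp_all add: val_alg_def)

definition interp_eqns :: "(nat trm \<times> nat trm) list" where
  "interp_eqns = (let x0 = Var 0; x1 = Var 1; x2 = Var 2; x3 = Var 3 in [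
    (tRun pZero x0, tZero),
    (tRun pSucc (tCons x0 x1), tSuc x0),
    (tRun (pProj x0) x1, tNth x0 x1),
    (tNth tZero (tCons x0 x1), x0),
    (tNth (tSuc x0) (tCons x1 x2), tNth x0 x2),
    (tRun tNil x0, tNil),
    (tRun (tCons x0 x1) x2, tCons (tRun x0 x2) (tRun x1 x2)),
    (tRun (pComp x0 x1) x2, tRun x0 (tRun x1 x2)),
    (tRun (pPrimRec x0 x1) (tCons tZero x2), tRun x0 x2),
    (tRun (pPrimRec x0 x1) (tCons (tSuc x3) x2),
       tRun x1 (tCons (tRun (pPrimRec x0 x1) (tCons x3 x2)) (tCons x3 x2))),
    (tRun (pMu x0) x1, tMin x0 tZero x1),
    (tMin x0 x1 x2, tMinStep (tRun x0 (tCons x1 x2)) x0 x1 x2),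
    (tMinStep tZero x0 x1 x2, x1),
    (tMinStep (tSuc x3) x0 x1 x2, tMin x0 (tSuc x1) x2),
    (tCollapse tZero x0, tZero)])"

lemma val_alg_satisfies_interp_eqns: "satisfies val_alg interp_eqns"
  by (auto simp: satisfies_def interp_eqns_def Let_def vmin_run_unfold vmin_step_def
      vcollapse_def split: val.splits)

primrec tnum :: "nat \<Rightarrow> 'v trm" where
  "tnum 0 = tZero"
| "tnum (Suc n) = tSuc (tnum n)"

definition tlist :: "'v trm list \<Rightarrow> 'v trm" where
  "tlist ts = foldr tCons ts tNil"

lemma tlist_simps [simp]: "tlist [] = tNil" "tlist (t # ts) = tCons t (tlist ts)"
  by (simp_all add: tlist_def)

fun code_trm :: "recf \<Rightarrow> 'v trm" where
  "code_trm Zero = pZero"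
| "code_trm Succ = pSucc"
| "code_trm (Proj i) = pProj (tnum i)"
| "code_trm (Comp f gs) = pComp (code_trm f) (tlist (map code_trm gs))"
| "code_trm (PrimRec f g) = pPrimRec (code_trm f) (code_trm g)"
| "code_trm (Mu f) = pMu (code_trm f)"

lemma wf_tnum [simp]: "wf_trm interp_sig (tnum n)"
  by (induction n) auto

lemma wf_tlist [simp]: "\<forall>t \<in> set ts. wf_trm interp_sig t \<Longrightarrow> wf_trm interp_sig (tlist ts)"
  by (induction ts) auto

lemma wf_code_trm [simp]: "wf_trm interp_sig (code_trm p)"
  by (induction p rule: code_trm.induct) auto

lemma eval_tnum [simp]: "eval_trm val_alg \<rho> (tnum n) = vnum n"
  by (induction n) auto

lemma eval_tlist [simp]: "eval_trm val_alg \<rho> (tlist ts) = vlist (map (eval_trm val_alg \<rho>) ts)"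
  by (induction ts) auto

lemma eval_code_trm [simp]: "eval_trm val_alg \<rho> (code_trm p) = vcode p"
  by (induction p rule: code_trm.induct) (auto intro!: arg_cong[where f = vlist])

lemma subst_tnum [simp]: "subst \<sigma> (tnum n) = tnum n"
  by (induction n) auto

lemma subst_tlist [simp]: "subst \<sigma> (tlist ts) = tlist (map (subst \<sigma>) ts)"
  by (induction ts) auto

lemma subst_code_trm [simp]: "subst \<sigma> (code_trm p) = code_trm p"
  by (induction p rule: code_trm.induct) (auto intro!: arg_cong[where f = tlist])

locale interp_presentation =
  fixes E :: "(nat trm \<times> nat trm) list"
  assumes interp_eqns_subset: "set interp_eqns \<subseteq> set E"
begin

declare eqv.eqv_trans [trans]

abbreviation eqv_E :: "unit trm \<Rightarrow> unit trm \<Rightarrow> bool" (infix "\<approx>" 50) where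
  "s \<approx> t \<equiv> eqv interp_sig E s t"

lemma eqv_interp_eqns_nth:
  assumes "i < length interp_eqns" and "\<forall>t \<in> set ts. wf_trm interp_sig t"
  shows "subst (nth_default tZero ts) (fst (interp_eqns ! i))
    \<approx> subst (nth_default tZero ts) (snd (interp_eqns ! i))"
proof (rule eqv.eqv_ax)
  show "(fst (interp_eqns ! i), snd (interp_eqns ! i)) \<in> set E"
    using assms(1) interp_eqns_subset by auto
  show "\<forall>v. wf_trm interp_sig (nth_default tZero ts v)"
    using assms(2) by (auto simp: nth_default_def)
qed

lemma run_pZero:
  "wf_trm interp_sig a \<Longrightarrow>
    tRun pZero a \<approx> tZero"
  using eqv_interp_eqns_nth[of 0 "[a]"] by (simp add: interp_eqns_def Let_def nth_default_def)

lemma run_pSucc: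
  "wf_trm interp_sig a \<Longrightarrow> wf_trm interp_sig b \<Longrightarrow>
    tRun pSucc (tCons a b) \<approx> tSuc a"
  using eqv_interp_eqns_nth[of 1 "[a, b]"] by (simp add: interp_eqns_def Let_def nth_default_def)

lemma run_pProj:
  "wf_trm interp_sig a \<Longrightarrow> wf_trm interp_sig b \<Longrightarrow>
    tRun (pProj a) b \<approx> tNth a b"
  using eqv_interp_eqns_nth[of 2 "[a, b]"] by (simp add: interp_eqns_def Let_def nth_default_def)

lemma nth_tZero:
  "wf_trm interp_sig a \<Longrightarrow> wf_trm interp_sig b \<Longrightarrow>
    tNth tZero (tCons a b) \<approx> a"
  using eqv_interp_eqns_nth[of 3 "[a, b]"] by (simp add: interp_eqns_def Let_def nth_default_def)

lemma nth_tSuc: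
  "wf_trm interp_sig a \<Longrightarrow> wf_trm interp_sig b \<Longrightarrow> wf_trm interp_sig c \<Longrightarrow>
    tNth (tSuc a) (tCons b c) \<approx> tNth a c"
  using eqv_interp_eqns_nth[of 4 "[a, b, c]"] by (simp add: interp_eqns_def Let_def nth_default_def)

lemma run_tNil:
  "wf_trm interp_sig a \<Longrightarrow>
    tRun tNil a \<approx> tNil"
  using eqv_interp_eqns_nth[of 5 "[a]"] by (simp add: interp_eqns_def Let_def nth_default_def)

lemma run_tCons:
  "wf_trm interp_sig a \<Longrightarrow> wf_trm interp_sig b \<Longrightarrow> wf_trm interp_sig c \<Longrightarrow>
    tRun (tCons a b) c \<approx> tCons (tRun a c) (tRun b c)"
  using eqv_interp_eqns_nth[of 6 "[a, b, c]"] by (simp add: interp_eqns_def Let_def nth_default_def)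

lemma run_pComp:
  "wf_trm interp_sig a \<Longrightarrow> wf_trm interp_sig b \<Longrightarrow> wf_trm interp_sig c \<Longrightarrow>
    tRun (pComp a b) c \<approx> tRun a (tRun b c)"
  using eqv_interp_eqns_nth[of 7 "[a, b, c]"] by (simp add: interp_eqns_def Let_def nth_default_def)

lemma run_pPrimRec_tZero:
  "wf_trm interp_sig a \<Longrightarrow> wf_trm interp_sig b \<Longrightarrow> wf_trm interp_sig c \<Longrightarrow>
    tRun (pPrimRec a b) (tCons tZero c) \<approx> tRun a c"
  using eqv_interp_eqns_nth[of 8 "[a, b, c]"] by (simp add: interp_eqns_def Let_def nth_default_def)

lemma run_pPrimRec_tSuc:
  "wf_trm interp_sig a \<Longrightarrow> wf_trm interp_sig b \<Longrightarrow> wf_trm interp_sig c \<Longrightarrow> wf_trm interp_sig d \<Longrightarrow>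
    tRun (pPrimRec a b) (tCons (tSuc d) c) \<approx> tRun b (tCons (tRun (pPrimRec a b) (tCons d c)) (tCons d c))"
  using eqv_interp_eqns_nth[of 9 "[a, b, c, d]"] by (simp add: interp_eqns_def Let_def nth_default_def)

lemma run_pMu:
  "wf_trm interp_sig a \<Longrightarrow> wf_trm interp_sig b \<Longrightarrow>
    tRun (pMu a) b \<approx> tMin a tZero b"
  using eqv_interp_eqns_nth[of 10 "[a, b]"] by (simp add: interp_eqns_def Let_def nth_default_def)

lemma min_unfold:
  "wf_trm interp_sig a \<Longrightarrow> wf_trm interp_sig b \<Longrightarrow> wf_trm interp_sig c \<Longrightarrow>
    tMin a b c \<approx> tMinStep (tRun a (tCons b c)) a b c"
  using eqv_interp_eqns_nth[of 11 "[a, b, c]"] by (simp add: interp_eqns_def Let_def nth_default_def)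

lemma min_step_tZero:
  "wf_trm interp_sig a \<Longrightarrow> wf_trm interp_sig b \<Longrightarrow> wf_trm interp_sig c \<Longrightarrow>
    tMinStep tZero a b c \<approx> b"
  using eqv_interp_eqns_nth[of 12 "[a, b, c]"] by (simp add: interp_eqns_def Let_def nth_default_def)

lemma min_step_tSuc:
  "wf_trm interp_sig a \<Longrightarrow> wf_trm interp_sig b \<Longrightarrow> wf_trm interp_sig c \<Longrightarrow> wf_trm interp_sig d \<Longrightarrow>
    tMinStep (tSuc d) a b c \<approx> tMin a (tSuc b) c"
  using eqv_interp_eqns_nth[of 13 "[a, b, c, d]"] by (simp add: interp_eqns_def Let_def nth_default_def)

lemma collapse_tZero:
  "wf_trm interp_sig a \<Longrightarrow>
    tCollapse tZero a \<approx> tZero"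
  using eqv_interp_eqns_nth[of 14 "[a]"] by (simp add: interp_eqns_def Let_def nth_default_def)

lemma eqv_refl_wf [intro]: "wf_trm interp_sig t \<Longrightarrow> t \<approx> t"
  by (rule eqv.eqv_refl)

lemma eqv_App2:
  "f < length interp_sig \<Longrightarrow> interp_sig ! f = 2 \<Longrightarrow> a \<approx> a' \<Longrightarrow> b \<approx> b' \<Longrightarrow>
    App f [a, b] \<approx> App f [a', b']"
  by (rule eqv.eqv_cong) auto

lemma eqv_App4:
  "f < length interp_sig \<Longrightarrow> interp_sig ! f = 4 \<Longrightarrow> a \<approx> a' \<Longrightarrow> b \<approx> b' \<Longrightarrow> c \<approx> c' \<Longrightarrow>
    d \<approx> d' \<Longrightarrow> App f [a, b, c, d] \<approx> App f [a', b', c', d']"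
  by (rule eqv.eqv_cong) auto

lemma nth_tlist_tnum: "i < length xs \<Longrightarrow> tNth (tnum i) (tlist (map tnum xs)) \<approx> tnum (xs ! i)"
proof (induction xs arbitrary: i)
  case (Cons x xs)
  show ?case
  proof (cases i)
    case 0
    then show ?thesis by (simp add: nth_tZero)
  next
    case (Suc j)
    then have "tNth (tnum i) (tlist (map tnum (x # xs))) \<approx> tNth (tnum j) (tlist (map tnum xs))"
      by (simp add: nth_tSuc)
    also have "\<dots> \<approx> tnum (xs ! j)"
      using Cons.prems Suc by (intro Cons.IH) simp
    finally show ?thesis using Suc by simp
  qed
qed simp

lemma run_tlist_code_trm:
  assumes "list_all2 (\<lambda>g y. tRun (code_trm g) X \<approx> tnum y) gs ys" and "wf_trm interp_sig X"
  shows "tRun (tlist (map code_trm gs)) X \<approx> tlist (map tnum ys)"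
  using assms(1)
proof (induction rule: list_all2_induct)
  case Nil
  show ?case using assms(2) by (simp add: run_tNil)
next
  case (Cons g gs y ys)
  have "tRun (tlist (map code_trm (g # gs))) X \<approx> tCons (tRun (code_trm g) X) (tRun (tlist (map code_trm gs)) X)"
    using assms(2) by (simp add: run_tCons)
  also have "\<dots> \<approx> tlist (map tnum (y # ys))"
    using Cons by (simp add: eqv_App2)
  finally show ?case .
qed

lemma min_tnum:
  assumes "tRun F (tCons (tnum n) X) \<approx> tZero"
    and "\<forall>k<n. \<exists>y. tRun F (tCons (tnum k) X) \<approx> tSuc (tnum y)"
    and "wf_trm interp_sig F" "wf_trm interp_sig X" "m \<le> n"
  shows "tMin F (tnum m) X \<approx> tnum n"
  using assms(5)
proof (induction rule: inc_induct)
  case base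
  have "tMin F (tnum n) X \<approx> tMinStep (tRun F (tCons (tnum n) X)) F (tnum n) X"
    using assms by (simp add: min_unfold)
  also have "\<dots> \<approx> tMinStep tZero F (tnum n) X"
    using assms by (intro eqv_App4) auto
  also have "\<dots> \<approx> tnum n"
    using assms by (simp add: min_step_tZero)
  finally show ?case .
next
  case (step m)
  then obtain y where y: "tRun F (tCons (tnum m) X) \<approx> tSuc (tnum y)"
    using assms(2) by blast
  have "tMin F (tnum m) X \<approx> tMinStep (tRun F (tCons (tnum m) X)) F (tnum m) X"
    using assms by (simp add: min_unfold)
  also have "\<dots> \<approx> tMinStep (tSuc (tnum y)) F (tnum m) X"
    using assms y by (intro eqv_App4) auto
  also have "\<dots> \<approx> tMin F (tnum (Suc m)) X"
    using assms by (simp add: min_step_tSuc)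
  also have "\<dots> \<approx> tnum n"
    by (fact step.IH)
  finally show ?case .
qed

theorem run_code_trm: "ev p xs y \<Longrightarrow> tRun (code_trm p) (tlist (map tnum xs)) \<approx> tnum y"
proof (induction rule: ev.induct)
  case (ev_zero xs)
  show ?case by (simp add: run_pZero)
next
  case (ev_succ x xs)
  show ?case by (simp add: run_pSucc)
next
  case (ev_proj i xs)
  have "tRun (code_trm (Proj i)) (tlist (map tnum xs)) \<approx> tNth (tnum i) (tlist (map tnum xs))"
    by (simp add: run_pProj)
  also have "\<dots> \<approx> tnum (xs ! i)"
    using ev_proj by (rule nth_tlist_tnum)
  finally show ?case .
next
  case (ev_comp xs gs ys f z)
  let ?X = "tlist (map tnum xs)"
  have "tRun (code_trm (Comp f gs)) ?X \<approx> tRun (code_trm f) (tRun (tlist (map code_trm gs)) ?X)"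
    by (simp add: run_pComp)
  also have "\<dots> \<approx> tRun (code_trm f) (tlist (map tnum ys))"
    using ev_comp.IH(1)
    by (intro eqv_App2 eqv_refl_wf run_tlist_code_trm) (simp_all add: list_all2_conv_all_nth)
  also have "\<dots> \<approx> tnum z"
    by (fact ev_comp.IH(2))
  finally show ?case .
next
  case (ev_prim0 f xs z g)
  have "tRun (code_trm (PrimRec f g)) (tlist (map tnum (0 # xs))) \<approx> tRun (code_trm f) (tlist (map tnum xs))"
    by (simp add: run_pPrimRec_tZero)
  also have "\<dots> \<approx> tnum z"
    by (fact ev_prim0.IH)
  finally show ?case .
next
  case (ev_primS f g n xs y z)
  let ?X = "tlist (map tnum xs)"
  have "tRun (code_trm (PrimRec f g)) (tlist (map tnum (Suc n # xs))) \<approx>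
      tRun (code_trm g) (tCons (tRun (code_trm (PrimRec f g)) (tCons (tnum n) ?X)) (tCons (tnum n) ?X))"
    by (simp add: run_pPrimRec_tSuc)
  also have "\<dots> \<approx> tRun (code_trm g) (tCons (tnum y) (tCons (tnum n) ?X))"
    using ev_primS.IH(1) by (intro eqv_App2) auto
  also have "\<dots> \<approx> tnum z"
    using ev_primS.IH(2) by simp
  finally show ?case .
next
  case (ev_mu f n xs)
  let ?X = "tlist (map tnum xs)"
  have "\<forall>k<n. \<exists>y. tRun (code_trm f) (tCons (tnum k) ?X) \<approx> tSuc (tnum y)"
  proof (intro allI impI)
    fix k assume "k < n"
    then obtain y where "0 < y" "tRun (code_trm f) (tlist (map tnum (k # xs))) \<approx> tnum y"
      using ev_mu.IH(2) by blast
    then show "\<exists>y. tRun (code_trm f) (tCons (tnum k) ?X) \<approx> tSuc (tnum y)"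
      by (cases y) auto
  qed
  then have "tMin (code_trm f) tZero ?X \<approx> tnum n"
    using ev_mu.IH(1) min_tnum[of "code_trm f" n ?X 0] by simp
  then show ?case
    using eqv.eqv_trans[OF run_pMu] by simp
qed

lemma affine_if_collapse_eqn:
  assumes "(tCollapse (tRun (code_trm P) (tlist (map tnum xs))) (Var 0), Var 0) \<in> set E"
    and "ev P xs 0"
  shows "affine interp_sig E"
proof -
  let ?c = "tRun (code_trm P) (tlist (map tnum xs))"
  have to_zero: "t \<approx> tZero" if "wf_trm interp_sig t" for t
  proof -
    have "tCollapse ?c t \<approx> t"
      using eqv.eqv_ax[OF assms(1), where sig = interp_sig and \<sigma> = "nth_default tZero [t]"] that
      by (simp add: nth_default_def comp_def)
    then have "t \<approx> tCollapse ?c t"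
      by (rule eqv.eqv_sym)
    also have "\<dots> \<approx> tCollapse tZero t"
      using run_code_trm[OF assms(2)] that by (intro eqv_App2) auto
    also have "\<dots> \<approx> tZero"
      using that by (rule collapse_tZero)
    finally show ?thesis .
  qed
  have "t \<approx> Var ()" if "wf_trm interp_sig t" for t
    using to_zero[OF that] eqv.eqv_sym[OF to_zero[of "Var ()"]] by (auto intro: eqv.eqv_trans)
  then show ?thesis by (simp add: affine_iff_eqv_Var)
qed

end

definition collapse_instance :: "recf \<Rightarrow> nat list \<Rightarrow> (nat trm \<times> nat trm) list" where
  "collapse_instance P xs =
    (tCollapse (tRun (code_trm P) (tlist (map tnum xs))) (Var 0), Var 0) # interp_eqns"

lemma valid_collapse_instance: "valid_instance interp_sig (collapse_instance P xs)"
  by (simp add: valid_instance_def collapse_instance_def interp_eqns_def Let_def)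

theorem affine_collapse_instance_iff:
  assumes "ev P xs y"
  shows "affine interp_sig (collapse_instance P xs) \<longleftrightarrow> y = 0"
proof
  assume affine: "affine interp_sig (collapse_instance P xs)"
  show "y = 0"
  proof (rule ccontr)
    assume "y \<noteq> 0"
    with run_vcode[OF assms] have model: "satisfies val_alg (collapse_instance P xs)"
      using val_alg_satisfies_interp_eqns
      by (cases y) (auto simp: satisfies_def collapse_instance_def vcollapse_def comp_def)
    from affine have "eqv interp_sig (collapse_instance P xs) tZero (Var ())"
      by (simp add: affine_iff_eqv_Var)
    from eqv_sound[OF this model, of "\<lambda>_. VNil"] show False by simp
  qed
next
  assume "y = 0"
  interpret interp_presentation "collapse_instance P xs"
    by unfold_locales (auto simp: collapse_instance_def)
  show "affine interp_sig (collapse_instance P xs)"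
    using assms \<open>y = 0\<close> by (intro affine_if_collapse_eqn) (auto simp: collapse_instance_def)
qed

section \<open>Programs computing codes\<close>

lemma ev_Proj_0: "ev (Proj 0) (x # xs) x"
  using ev.ev_proj[of 0 "x # xs"] by simp

lemma ev_Proj_1: "ev (Proj 1) (x # y # xs) y"
  using ev.ev_proj[of 1 "x # y # xs"] by simp

lemma ev_Comp1: "ev g xs y \<Longrightarrow> ev f [y] z \<Longrightarrow> ev (Comp f [g]) xs z"
  by (rule ev.ev_comp[of _ _ "[y]"]) auto

lemma ev_Comp2: "ev g xs y \<Longrightarrow> ev h xs y' \<Longrightarrow> ev f [y, y'] z \<Longrightarrow> ev (Comp f [g, h]) xs z"
  by (rule ev.ev_comp[of _ _ "[y, y']"]) auto

lemma ev_Comp_Succ: "ev g xs y \<Longrightarrow> ev (Comp Succ [g]) xs (Suc y)"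
  by (rule ev_Comp1) (auto intro: ev.ev_succ)

primrec const_rf :: "nat \<Rightarrow> recf" where
  "const_rf 0 = Zero"
| "const_rf (Suc c) = Comp Succ [const_rf c]"

lemma ev_const_rf: "ev (const_rf c) xs c"
  by (induction c) (auto intro: ev.ev_zero ev_Comp_Succ)

definition add_rf :: recf where
  "add_rf = PrimRec (Proj 0) (Comp Succ [Proj 0])"

lemma ev_add_rf: "ev add_rf [a, b] (a + b)"
proof (induction a)
  case 0
  show ?case unfolding add_rf_def by (auto intro: ev.ev_prim0 ev_Proj_0)
next
  case (Suc a)
  then show ?case
    unfolding add_rf_def by (auto intro!: ev.ev_primS[where y = "a + b"] ev_Comp_Succ ev_Proj_0)
qed

definition triangle_rf :: recf where
  "triangle_rf = PrimRec Zero (Comp add_rf [Proj 0, Comp Succ [Proj 1]])"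

lemma ev_triangle_rf: "ev triangle_rf [n] (triangle n)"
proof (induction n)
  case 0
  show ?case unfolding triangle_rf_def by (auto intro: ev.intros)
next
  case (Suc n)
  have "ev (Comp add_rf [Proj 0, Comp Succ [Proj 1]]) [triangle n, n] (triangle n + Suc n)"
    by (rule ev_Comp2[OF ev_Proj_0 ev_Comp_Succ[OF ev_Proj_1] ev_add_rf])
  with Suc show ?case unfolding triangle_rf_def by (auto intro: ev.ev_primS)
qed

definition pair_rf :: "recf \<Rightarrow> recf \<Rightarrow> recf" where
  "pair_rf g h = Comp add_rf [Comp triangle_rf [Comp add_rf [g, h]], g]"

lemma ev_pair_rf: "ev g xs x \<Longrightarrow> ev h xs y \<Longrightarrow> ev (pair_rf g h) xs (prod_encode (x, y))"
  unfolding pair_rf_def prod_encode_def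
  by (auto intro!: ev_Comp2[OF ev_Comp1[OF ev_Comp2 ev_triangle_rf] _ ev_add_rf] ev_add_rf)

definition cons_rf :: "recf \<Rightarrow> recf \<Rightarrow> recf" where
  "cons_rf g h = Comp Succ [pair_rf g h]"

lemma ev_cons_rf: "ev g xs x \<Longrightarrow> ev h xs (list_encode ys) \<Longrightarrow> ev (cons_rf g h) xs (list_encode (x # ys))"
  unfolding cons_rf_def by (auto intro: ev_Comp_Succ ev_pair_rf)

definition app_rf :: "nat \<Rightarrow> recf list \<Rightarrow> recf" where
  "app_rf f gs = pair_rf (const_rf (Suc f)) (foldr cons_rf gs Zero)"

lemma ev_app_rf:
  assumes "list_all2 (\<lambda>g t. ev g xs (enc_trm t)) gs ts"
  shows "ev (app_rf f gs) xs (enc_trm (App f ts))"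
proof -
  from assms have "ev (foldr cons_rf gs Zero) xs (list_encode (map enc_trm ts))"
  proof (induction rule: list_all2_induct)
    case Nil
    show ?case using ev.ev_zero by simp
  next
    case (Cons g gs t ts)
    then show ?case using ev_cons_rf by (simp only: foldr.simps list.map o_apply)
  qed
  then show ?thesis
    unfolding app_rf_def enc_trm.simps by (rule ev_pair_rf[OF ev_const_rf])
qed

definition tnum_rf :: recf where
  "tnum_rf = PrimRec (const_rf (enc_trm (tZero :: nat trm))) (app_rf 1 [Proj 0])"

lemma ev_tnum_rf: "ev tnum_rf [n] (enc_trm (tnum n :: nat trm))"
proof (induction n)
  case 0
  show ?case unfolding tnum_rf_def by (auto intro: ev.ev_prim0 ev_const_rf)
next
  case (Suc n)
  have "ev (app_rf 1 [Proj 0]) [enc_trm (tnum n :: nat trm), n] (enc_trm (App 1 [tnum n :: nat trm]))"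
    by (intro ev_app_rf list.rel_intros ev_Proj_0)
  with Suc show ?case unfolding tnum_rf_def by (auto intro: ev.ev_primS)
qed

section \<open>Self-reference\<close>

definition diag_lhs_rf :: "recf \<Rightarrow> recf" where
  "diag_lhs_rf D =
    app_rf 14
     [app_rf 10
       [app_rf 7 [const_rf (enc_trm (code_trm D :: nat trm)), app_rf 3 [Proj 0, const_rf (enc_trm (tNil :: nat trm))]],
        app_rf 3 [Comp tnum_rf [Proj 0], const_rf (enc_trm (tNil :: nat trm))]],
      const_rf (enc_trm (Var 0 :: nat trm))]"

definition diag_rf :: "recf \<Rightarrow> recf" where
  "diag_rf D =
    pair_rf (const_rf (list_encode interp_sig))
      (cons_rf (pair_rf (diag_lhs_rf D) (const_rf (enc_trm (Var 0 :: nat trm))))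
        (const_rf (list_encode (map (\<lambda>(l, r). prod_encode (enc_trm l, enc_trm r)) interp_eqns))))"

lemma ev_diag_lhs_rf:
  "ev (diag_lhs_rf D) [enc_trm t]
    (enc_trm (tCollapse (tRun (pComp (code_trm D) (tlist [t])) (tlist [tnum (enc_trm t)])) (Var 0)))"
  unfolding diag_lhs_rf_def tlist_simps
  by (intro ev_app_rf list.rel_intros ev_const_rf ev_Proj_0 ev_Comp1[OF ev_Proj_0 ev_tnum_rf])

lemma ev_diag_rf:
  "ev (diag_rf D) [enc_trm (code_trm Q :: nat trm)]
    (enc_instance interp_sig (collapse_instance (Comp D [Q]) [enc_trm (code_trm Q :: nat trm)]))"
  unfolding diag_rf_def enc_instance_def collapse_instance_def list.map prod.case
  using ev_diag_lhs_rf[of D "code_trm Q"] by (intro ev_pair_rf ev_cons_rf ev_const_rf) simp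

theorem theorem4:
  shows "\<not> (\<exists>r. decides_affine r)"
proof
  assume "\<exists>r. decides_affine r"
  then obtain D where "decides_affine D" ..
  define Q where "Q = diag_rf D"
  define E where "E = collapse_instance (Comp D [Q]) [enc_trm (code_trm Q :: nat trm)]"
  have "ev D [enc_instance interp_sig E] (if affine interp_sig E then 1 else 0)"
    using \<open>decides_affine D\<close> valid_collapse_instance unfolding decides_affine_def E_def by blast
  then have "ev (Comp D [Q]) [enc_trm (code_trm Q :: nat trm)] (if affine interp_sig E then 1 else 0)"
    unfolding Q_def E_def by (rule ev_Comp1[OF ev_diag_rf])
  then have "affine interp_sig E \<longleftrightarrow> (if affine interp_sig E then 1 else 0) = (0 :: nat)"
    unfolding E_def by (rule affine_collapse_instance_iff)
  then show False by (cases "affine interp_sig E") simp_all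
qed

end
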